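(* Let $R$ be a principal ideal domain and $p$ a prime element of $R$. The ideal $I = (X^2-p,\ X^3)$ of $R[X]$ has radical $(X,p)$, which is a maximal ideal of $R[X]$; hence $I$ is a primary ideal of $R[X]$ which is not power stable.
   Context: An ideal $I$ of the polynomial ring $R[X]$ over an integral domain $R$ is called power stable if $I^t\cap R = (I\cap R)^t$ for all integers $t\geq 1$. *)

theory Defs
  imports "HOL-Computational_Algebra.Polynomial" "HOL-Computational_Algebra.Factorial_Ring"
begin

definition is_ideal :: "'a::comm_ring_1 set \<Rightarrow> bool" where
  "is_ideal I \<longleftrightarrow> 0 \<in> I \<and> (\<forall>a\<in>I. \<forall>b\<in>I. a + b \<in> I) \<and> (\<forall>r. \<forall>a\<in>I. r * a \<in> I)"

definition ideal_gen :: "'a::comm_ring_1 set \<Rightarrow> 'a set" where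
  "ideal_gen S = \<Inter>{I. is_ideal I \<and> S \<subseteq> I}"

definition ideal_mult :: "'a::comm_ring_1 set \<Rightarrow> 'a set \<Rightarrow> 'a set" where
  "ideal_mult I J = ideal_gen {a * b |a b. a \<in> I \<and> b \<in> J}"

primrec ideal_pow :: "'a::comm_ring_1 set \<Rightarrow> nat \<Rightarrow> 'a set" where
  "ideal_pow I 0 = UNIV"
| "ideal_pow I (Suc n) = ideal_mult I (ideal_pow I n)"

definition radical :: "'a::comm_ring_1 set \<Rightarrow> 'a set" where
  "radical I = {x. \<exists>n. x ^ n \<in> I}"

definition maximal_ideal :: "'a::comm_ring_1 set \<Rightarrow> bool" where
  "maximal_ideal I \<longleftrightarrow> is_ideal I \<and> I \<noteq> UNIV \<and>
     (\<forall>J. is_ideal J \<and> I \<subseteq> J \<longrightarrow> J = I \<or> J = UNIV)"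

definition primary_ideal :: "'a::comm_ring_1 set \<Rightarrow> bool" where
  "primary_ideal I \<longleftrightarrow> is_ideal I \<and> I \<noteq> UNIV \<and>
     (\<forall>a b. a * b \<in> I \<longrightarrow> a \<in> I \<or> b \<in> radical I)"

definition PID_type :: "'a::idom itself \<Rightarrow> bool" where
  "PID_type _ \<longleftrightarrow> (\<forall>I::'a set. is_ideal I \<longrightarrow> (\<exists>a. I = ideal_gen {a}))"

text \<open>Contraction \<open>I \<inter> R\<close> of an ideal of \<open>R[X]\<close>, with \<open>R\<close> identified with the constants.\<close>
definition contr :: "'a::comm_ring_1 poly set \<Rightarrow> 'a set" where
  "contr I = {c. [:c:] \<in> I}"

definition power_stable :: "'a::idom poly set \<Rightarrow> bool" where
  "power_stable I \<longleftrightarrow> (\<forall>t\<ge>1. contr (ideal_pow I t) = ideal_pow (contr I) t)"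

end

theory Submission imports Defs begin

(*
  Then the concrete computation: M is the set of
  polynomials whose constant term is divisible by p; M is maximal because
  (p, c) = R for every c not divisible by p; I lies in M, and h^4 lies in I
  for every h in M (using p^2 in I), so radical I = M and I is primary.  Finally I is not power stable:
  p^3 lies in I^2 by an explicit identity, while every constant of I is a
  multiple of p^2, so (I \<inter> R)^2 consists of multiples of p^4.
*)

lemma ideal_gen_ideal: "is_ideal (ideal_gen S)"
  unfolding ideal_gen_def is_ideal_def by auto

lemma ideal_gen_sub: "S \<subseteq> ideal_gen S"
  unfolding ideal_gen_def by auto

lemma ideal_gen_least: "is_ideal J \<Longrightarrow> S \<subseteq> J \<Longrightarrow> ideal_gen S \<subseteq> J"
  unfolding ideal_gen_def by auto

lemma ideal_addI: "is_ideal J \<Longrightarrow> a \<in> J \<Longrightarrow> b \<in> J \<Longrightarrow> a + b \<in> J"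
  unfolding is_ideal_def by simp

lemma ideal_multI: "is_ideal J \<Longrightarrow> a \<in> J \<Longrightarrow> r * a \<in> J"
  unfolding is_ideal_def by simp

lemma ideal_diffI: "is_ideal J \<Longrightarrow> a \<in> J \<Longrightarrow> b \<in> J \<Longrightarrow> a - b \<in> J"
  using ideal_addI[of J a "(-1) * b"] ideal_multI[of J b "-1"] by simp

lemma ideal_one_UNIV: "is_ideal J \<Longrightarrow> 1 \<in> J \<Longrightarrow> J = UNIV"
  using ideal_multI[of J 1] by auto

lemma dvd_ideal: "is_ideal {c::'a::comm_ring_1. q dvd c}"
  unfolding is_ideal_def by auto

lemma ideal_gen2: "ideal_gen {x::'a::comm_ring_1, y} = {a * x + b * y | a b. True}"
  (is "_ = ?L")
proof
  have "is_ideal ?L"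
    unfolding is_ideal_def
  proof (intro conjI ballI allI)
    show "0 \<in> ?L" by (intro CollectI exI[of _ 0]) simp
  next
    fix u v assume "u \<in> ?L" "v \<in> ?L"
    then obtain a b c d where "u = a * x + b * y" "v = c * x + d * y" by auto
    then show "u + v \<in> ?L"
      by (intro CollectI exI[of _ "a + c"] exI[of _ "b + d"]) (simp add: algebra_simps)
  next
    fix r u assume "u \<in> ?L"
    then obtain a b where "u = a * x + b * y" by auto
    then show "r * u \<in> ?L"
      by (intro CollectI exI[of _ "r * a"] exI[of _ "r * b"]) (simp add: algebra_simps)
  qed
  moreover have "x = 1 * x + 0 * y" "y = 0 * x + 1 * y" by simp_all
  then have "{x, y} \<subseteq> ?L" by blast
  ultimately show "ideal_gen {x, y} \<subseteq> ?L" by (rule ideal_gen_least)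
next
  have "x \<in> ideal_gen {x, y}" "y \<in> ideal_gen {x, y}" using ideal_gen_sub[of "{x, y}"] by auto
  then show "?L \<subseteq> ideal_gen {x, y}"
    using ideal_gen_ideal[of "{x, y}"] by (auto intro: ideal_addI ideal_multI)
qed

lemma ideal_gen1: "ideal_gen {x::'a::comm_ring_1} = {a * x | a. True}"
proof -
  have "ideal_gen {x} = ideal_gen {x, 0}"
    by (intro equalityI ideal_gen_least ideal_gen_ideal)
       (use ideal_gen_sub[of "{x}"] ideal_gen_sub[of "{x, 0}"] ideal_gen_ideal[of "{x}"]
         in \<open>auto simp: is_ideal_def\<close>)
  then show ?thesis using ideal_gen2[of x 0] by simp
qed

lemma ideal_mult_mem:
  assumes "a \<in> A" "b \<in> B"
  shows "a * b \<in> ideal_mult A B"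
proof -
  have "a * b \<in> {a * b |a b. a \<in> A \<and> b \<in> B}" using assms by blast
  then show ?thesis unfolding ideal_mult_def using ideal_gen_sub by (rule subsetD[rotated])
qed

lemma ideal_mult_least:
  assumes "is_ideal K" "\<And>a b. a \<in> A \<Longrightarrow> b \<in> B \<Longrightarrow> a * b \<in> K"
  shows "ideal_mult A B \<subseteq> K"
  unfolding ideal_mult_def using assms by (intro ideal_gen_least) auto

lemma ideal_mult_ideal: "is_ideal (ideal_mult A B)"
  unfolding ideal_mult_def by (rule ideal_gen_ideal)

lemma ideal_pow_two:
  assumes "is_ideal J"
  shows "ideal_pow J 2 = ideal_mult J J"
proof -
  have "ideal_mult J UNIV = J"
  proof
    show "ideal_mult J UNIV \<subseteq> J"
      by (rule ideal_mult_least[OF assms]) (metis ideal_multI[OF assms] mult.commute)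
    show "J \<subseteq> ideal_mult J UNIV"
      using ideal_mult_mem[of _ J 1 UNIV] by auto
  qed
  then show ?thesis by (simp add: numeral_2_eq_2)
qed

lemma ideal_mult_dvd:
  assumes "A \<subseteq> {c. a dvd c}" "B \<subseteq> {c. b dvd c}"
  shows "ideal_mult A B \<subseteq> {c::'a::comm_ring_1. a * b dvd c}"
  using assms by (intro ideal_mult_least[OF dvd_ideal]) (auto intro: mult_dvd_mono)

lemma maximal_idealI:
  assumes "is_ideal M" "M \<noteq> UNIV"
    and inv: "\<And>b. b \<notin> M \<Longrightarrow> \<exists>r. 1 - r * b \<in> M"
  shows "maximal_ideal M"
  unfolding maximal_ideal_def
proof (intro conjI allI impI assms(1,2))
  fix J assume J: "is_ideal J \<and> M \<subseteq> J"
  show "J = M \<or> J = UNIV"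
  proof (cases "J \<subseteq> M")
    case False
    then obtain b where "b \<in> J" "b \<notin> M" by blast
    then obtain r where "1 - r * b \<in> J" using inv J by blast
    then have "(1 - r * b) + r * b \<in> J"
      using J \<open>b \<in> J\<close> by (intro ideal_addI ideal_multI) auto
    then show ?thesis using J ideal_one_UNIV by auto
  qed (use J in auto)
qed

lemma maximal_ideal_inv:
  assumes M: "maximal_ideal M" and b: "b \<notin> M"
  shows "\<exists>r. 1 - r * b \<in> M"
proof -
  let ?K = "{m + r * b | m r. m \<in> M}"
  have MI: "is_ideal M" using M by (simp add: maximal_ideal_def)
  have "is_ideal ?K"
    unfolding is_ideal_def
  proof (intro conjI ballI allI)
    show "0 \<in> ?K" using MI by (intro CollectI exI[of _ 0]) (auto simp: is_ideal_def)
  next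
    fix u v assume "u \<in> ?K" "v \<in> ?K"
    then obtain m r m' r' where "u = m + r * b" "v = m' + r' * b" "m \<in> M" "m' \<in> M" by auto
    moreover have "m + m' \<in> M" using MI \<open>m \<in> M\<close> \<open>m' \<in> M\<close> by (rule ideal_addI)
    ultimately show "u + v \<in> ?K"
      by (intro CollectI exI[of _ "m + m'"] exI[of _ "r + r'"]) (simp add: algebra_simps)
  next
    fix s u assume "u \<in> ?K"
    then obtain m r where "u = m + r * b" "m \<in> M" by auto
    moreover have "s * m \<in> M" using MI \<open>m \<in> M\<close> by (rule ideal_multI)
    ultimately show "s * u \<in> ?K"
      by (intro CollectI exI[of _ "s * m"] exI[of _ "s * r"]) (simp add: algebra_simps)
  qed
  moreover have "M \<subseteq> ?K" by (force intro: exI[of _ 0])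
  moreover have "b \<in> ?K" using MI by (force simp: is_ideal_def intro: exI[of _ 0] exI[of _ 1])
  ultimately have "?K = UNIV" using M b unfolding maximal_ideal_def by blast
  then obtain m r where "1 = m + r * b" "m \<in> M" by blast
  then have "1 - r * b = m" by (simp add: algebra_simps)
  then show ?thesis using \<open>m \<in> M\<close> by blast
qed

lemma ideal_cancel_comaximal_power:
  assumes I: "is_ideal I" and ab: "a * b \<in> I"
  shows "a * (1 - r * b) ^ n \<in> I \<Longrightarrow> a \<in> I"
proof (induction n)
  case (Suc n)
  have "a * (1 - r * b) ^ n = a * (1 - r * b) ^ Suc n + (r * (1 - r * b) ^ n) * (a * b)"
    by (simp add: algebra_simps)
  also have "\<dots> \<in> I" by (rule ideal_addI[OF I Suc.prems ideal_multI[OF I ab]])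
  finally show ?case by (rule Suc.IH)
qed simp

lemma radical_maximal_imp_primary:
  assumes I: "is_ideal I" "I \<noteq> UNIV"
    and M: "maximal_ideal (radical I)"
  shows "primary_ideal I"
  unfolding primary_ideal_def
proof (intro conjI allI impI I)
  fix a b assume ab: "a * b \<in> I"
  show "a \<in> I \<or> b \<in> radical I"
  proof (rule disjCI)
    assume "b \<notin> radical I"
    then obtain r where "1 - r * b \<in> radical I" using maximal_ideal_inv[OF M] by blast
    then obtain n where "(1 - r * b) ^ n \<in> I" unfolding radical_def by blast
    then have "a * (1 - r * b) ^ n \<in> I" by (rule ideal_multI[OF I(1)])
    then show "a \<in> I" by (rule ideal_cancel_comaximal_power[OF I(1) ab])
  qed
qed

lemma PID_prime_bezout:
  fixes p :: "'a::idom"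
  assumes pid: "PID_type TYPE('a)" and p: "prime_elem p" and nd: "\<not> p dvd c"
  shows "\<exists>u v. 1 = u * p + v * c"
proof -
  obtain d where d: "ideal_gen {p, c} = ideal_gen {d}"
    using pid ideal_gen_ideal unfolding PID_type_def by blast
  have "p \<in> ideal_gen {d}" "c \<in> ideal_gen {d}" using d ideal_gen_sub[of "{p, c}"] by auto
  then obtain e e' where e: "p = e * d" and e': "c = e' * d" unfolding ideal_gen1 by auto
  have "\<not> p dvd d" using nd e' by auto
  moreover have "p dvd e * d" using e by simp
  ultimately obtain k where k: "e = p * k" using p prime_elem_dvd_multD by blast
  have "p * 1 = p * (k * d)" using e k by (metis mult.assoc mult_1_right)
  moreover have "p \<noteq> 0" using p by (simp add: prime_elem_def)
  ultimately have "1 = k * d" by (metis mult_cancel_left)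
  then have "1 \<in> ideal_gen {p, c}" unfolding d ideal_gen1 by auto
  then show ?thesis unfolding ideal_gen2 by blast
qed

section \<open>The ideals \<open>(X, p)\<close> and \<open>(X^2 - p, X^3)\<close>\<close>

lemma ideal_X_p_eq: "ideal_gen {[:0, 1:], [:p::'a::comm_ring_1:]} = {h. p dvd coeff h 0}"
  unfolding ideal_gen2
proof safe
  fix a b :: "'a poly"
  show "p dvd coeff (a * [:0, 1:] + b * [:p:]) 0" by (simp add: coeff_mult_0)
next
  fix h :: "'a poly" assume "p dvd coeff h 0"
  then obtain k where k: "coeff h 0 = p * k" by auto
  obtain c t where h: "h = pCons c t" by (cases h)
  have "h = t * [:0, 1:] + [:k:] * [:p:]" using h k by (simp add: algebra_simps)
  then show "\<exists>a b. h = a * [:0, 1:] + b * [:p:] \<and> True" by blast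
qed

lemma maximal_ideal_X_p:
  fixes p :: "'a::idom"
  assumes pid: "PID_type TYPE('a)" and p: "prime_elem p"
  shows "maximal_ideal {h::'a poly. p dvd coeff h 0}"
proof (rule maximal_idealI)
  show "is_ideal {h::'a poly. p dvd coeff h 0}"
    unfolding is_ideal_def by (auto simp: coeff_mult_0)
  have "(1::'a poly) \<notin> {h. p dvd coeff h 0}" using p by (simp add: prime_elem_def)
  then show "{h::'a poly. p dvd coeff h 0} \<noteq> UNIV" by blast
next
  fix h :: "'a poly" assume "h \<notin> {h. p dvd coeff h 0}"
  then have "\<not> p dvd coeff h 0" by simp
  then obtain u v where "1 = u * p + v * coeff h 0"
    using PID_prime_bezout[OF pid p] by blast
  then have "coeff (1 - [:v:] * h) 0 = u * p" by (simp add: coeff_mult_0 algebra_simps)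
  then have "1 - [:v:] * h \<in> {h. p dvd coeff h 0}" by simp
  then show "\<exists>r. 1 - r * h \<in> {h. p dvd coeff h 0}" by blast
qed

lemma ideal_I_sub_X_p:
  "ideal_gen {[:- p, 0, 1:], [:0, 0, 0, 1:]} \<subseteq> {h. (p::'a::comm_ring_1) dvd coeff h 0}"
  unfolding ideal_gen2 by (auto simp: coeff_mult_0)

lemma ideal_I_generators:
  "[:- p, 0, 1:] \<in> ideal_gen {[:- p, 0, 1:], [:0, 0, 0, 1:]}"
  "[:0, 0, 0, 1:] \<in> ideal_gen {[:- p, 0, 1:], [:0, 0, 0, 1:]}"
  using ideal_gen_sub[of "{[:- p, 0, 1:], [:0, 0, 0, 1:]}"] by auto

lemma p_square_in_ideal_I:
  "[:(p::'a::comm_ring_1)^2:] \<in> ideal_gen {[:- p, 0, 1:], [:0, 0, 0, 1:]}"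
proof -
  have "[:p^2:] = [:- p, 0, -1:] * [:- p, 0, 1:] + [:0, 1:] * [:0, 0, 0, 1:]"
    by (simp add: power2_eq_square)
  then show ?thesis unfolding ideal_gen2 by blast
qed

text \<open>If \<open>p\<close> divides the constant term of \<open>h\<close>, then \<open>h^4 \<in> (X^2 - p, X^3)\<close>:
  write \<open>h = u + v\<close> with \<open>u\<close> a multiple of \<open>p\<close> and \<open>v\<close> a multiple of \<open>X\<close>;
  then \<open>u^2\<close> and \<open>v^3\<close> lie in the ideal, and every monomial of \<open>(u + v)^4\<close> contains one of them.\<close>
lemma fourth_power_in_ideal_I:
  fixes p :: "'a::comm_ring_1"
  assumes "p dvd coeff h 0"
  shows "h ^ 4 \<in> ideal_gen {[:- p, 0, 1:], [:0, 0, 0, 1:]}"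
proof -
  let ?I = "ideal_gen {[:- p, 0, 1:], [:0, 0, 0, 1:]}"
  have I: "is_ideal ?I" by (rule ideal_gen_ideal)
  obtain k where k: "coeff h 0 = p * k" using assms by (rule dvdE)
  obtain t where h: "h = pCons (coeff h 0) t" by (cases h) simp
  define u where "u = [:coeff h 0:]"
  define v where "v = [:0, 1:] * t"
  have huv: "h = u + v" unfolding u_def v_def by (subst h) simp
  have u2_eq: "u ^ 2 = [:k ^ 2:] * [:p ^ 2:]"
    unfolding u_def k by (simp add: poly_const_pow power_mult_distrib mult.commute)
  have u2: "u ^ 2 \<in> ?I" unfolding u2_eq by (rule ideal_multI[OF I p_square_in_ideal_I])
  have v3_eq: "v ^ 3 = t ^ 3 * [:0, 0, 0, 1:]"
    unfolding v_def by (simp add: power_mult_distrib power3_eq_cube mult.commute)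
  have v3: "v ^ 3 \<in> ?I" unfolding v3_eq by (rule ideal_multI[OF I ideal_I_generators(2)])
  have "h ^ 4 = (u^2 + 4*u*v + 6*v^2) * u ^ 2 + (4*u + v) * v ^ 3"
    unfolding huv by (simp add: algebra_simps power2_eq_square power3_eq_cube power4_eq_xxxx)
  also have "\<dots> \<in> ?I"
    by (rule ideal_addI[OF I ideal_multI[OF I u2] ideal_multI[OF I v3]])
  finally show ?thesis .
qed

theorem radical_ideal_I:
  fixes p :: "'a::idom"
  assumes p: "prime_elem p"
  shows "radical (ideal_gen {[:- p, 0, 1:], [:0, 0, 0, 1:]}) = {h. p dvd coeff h 0}"
proof (intro set_eqI iffI)
  fix h assume "h \<in> radical (ideal_gen {[:- p, 0, 1:], [:0, 0, 0, 1:]})"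
  then obtain n where "p dvd coeff (h ^ n) 0"
    unfolding radical_def using ideal_I_sub_X_p by blast
  then show "h \<in> {h. p dvd coeff h 0}"
    using prime_elem_dvd_power[OF p] by (simp add: coeff_0_power)
qed (auto simp: radical_def dest: fourth_power_in_ideal_I)

section \<open>Failure of power stability\<close>

lemma contr_ideal:
  assumes "is_ideal I"
  shows "is_ideal (contr I)"
proof -
  have "[:0:] \<in> I" using assms by (simp add: is_ideal_def)
  moreover have "[:a + b:] \<in> I" if "[:a:] \<in> I" "[:b:] \<in> I" for a b
    using ideal_addI[OF assms that] by simp
  moreover have "[:r * a:] \<in> I" if "[:a:] \<in> I" for r a
    using ideal_multI[OF assms that, of "[:r:]"] by (simp add: mult.commute)
  ultimately show ?thesis unfolding is_ideal_def contr_def by simp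
qed

text \<open>Every constant in \<open>(X^2 - p, X^3)\<close> is a multiple of \<open>p^2\<close>: comparing the
  coefficients of \<open>1\<close> and \<open>X^2\<close> in \<open>c = a (X^2 - p) + b X^3\<close> gives
  \<open>c = -p a\<^sub>0\<close> and \<open>0 = a\<^sub>0 - p a\<^sub>2\<close>.\<close>
lemma contr_ideal_I:
  "contr (ideal_gen {[:- p, 0, 1:], [:0, 0, 0, 1:]}) \<subseteq> {c. (p::'a::comm_ring_1)^2 dvd c}"
proof
  fix c assume "c \<in> contr (ideal_gen {[:- p, 0, 1:], [:0, 0, 0, 1:]})"
  then obtain a b where ab: "[:c:] = a * [:- p, 0, 1:] + b * [:0, 0, 0, 1:]"
    unfolding contr_def ideal_gen2 by blast
  have "c = - p * coeff a 0"
    using arg_cong[OF ab, of "\<lambda>f. coeff f 0"] by (simp add: coeff_mult_0)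
  moreover have "0 = coeff a 0 - p * coeff a 2"
    using arg_cong[OF ab, of "\<lambda>f. coeff f 2"]
    by (simp add: coeff_mult numeral_2_eq_2 atMost_Suc)
  ultimately have "c = p^2 * (- coeff a 2)" by (simp add: algebra_simps power2_eq_square)
  then show "c \<in> {c. p^2 dvd c}" by simp
qed

lemma p_cube_identity:
  "(P::'b::comm_ring_1)^3 = (P + X^2 + X^2) * ((X^2 - P) * (X^2 - P))
     - (X + X + X) * ((X^2 - P) * X^3) + X^3 * X^3"
  by (simp add: algebra_simps power2_eq_square power3_eq_cube)

lemma p_cube_in_square_of_ideal_I:
  "[:(p::'a::comm_ring_1)^3:] \<in> ideal_pow (ideal_gen {[:- p, 0, 1:], [:0, 0, 0, 1:]}) 2"
proof -
  let ?F = "[:- p, 0, 1:]" and ?G = "[:0, 0, 0, 1:]" and ?X = "[:0, 1:] :: 'a poly"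
  let ?J = "ideal_pow (ideal_gen {?F, ?G}) 2"
  have J: "?J = ideal_mult (ideal_gen {?F, ?G}) (ideal_gen {?F, ?G})"
    by (rule ideal_pow_two[OF ideal_gen_ideal])
  have FG: "?F * ?F \<in> ?J" "?F * ?G \<in> ?J" "?G * ?G \<in> ?J"
    unfolding J by (intro ideal_mult_mem ideal_I_generators)+
  have JI: "is_ideal ?J" unfolding J by (rule ideal_mult_ideal)
  have gens: "?F = ?X^2 - [:p:]" "?G = ?X^3"
    by (simp_all add: power2_eq_square power3_eq_cube)
  have "[:p^3:] = ([:p:] + ?X^2 + ?X^2) * (?F * ?F) - (?X + ?X + ?X) * (?F * ?G) + ?G * ?G"
    unfolding gens by (simp only: p_cube_identity flip: poly_const_pow)
  also have "\<dots> \<in> ?J"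
    by (rule ideal_addI[OF JI ideal_diffI[OF JI ideal_multI[OF JI FG(1)] ideal_multI[OF JI FG(2)]]
          FG(3)])
  finally show ?thesis .
qed

theorem not_power_stable_ideal_I:
  fixes p :: "'a::idom"
  assumes p: "prime_elem p"
  shows "\<not> power_stable (ideal_gen {[:- p, 0, 1:], [:0, 0, 0, 1:]})"
proof
  let ?I = "ideal_gen {[:- p, 0, 1:], [:0, 0, 0, 1:]}"
  assume "power_stable ?I"
  then have "contr (ideal_pow ?I 2) = ideal_pow (contr ?I) 2"
    unfolding power_stable_def by simp
  moreover have "p^3 \<in> contr (ideal_pow ?I 2)"
    unfolding contr_def using p_cube_in_square_of_ideal_I by simp
  moreover have "ideal_pow (contr ?I) 2 \<subseteq> {c. p^2 * p^2 dvd c}"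
    unfolding ideal_pow_two[OF contr_ideal[OF ideal_gen_ideal]]
    by (rule ideal_mult_dvd[OF contr_ideal_I contr_ideal_I])
  ultimately have "p^3 * p dvd p^3 * 1" by (auto simp flip: power_add power_Suc2)
  moreover have "p^3 \<noteq> 0" using p by (simp add: prime_elem_def)
  ultimately have "p dvd 1" by (simp add: dvd_mult_cancel_left)
  then show False using p by (simp add: prime_elem_def)
qed

theorem mainTheorem19:
  fixes p :: "'a::idom"
  assumes "PID_type TYPE('a)"
    and "prime_elem p"
  defines "I \<equiv> ideal_gen {[:- p, 0, 1:], [:0, 0, 0, 1:]}"
  shows "radical I = ideal_gen {[:0, 1:], [:p:]}
    \<and> maximal_ideal (ideal_gen {[:0, 1:], [:p:]})
    \<and> primary_ideal I
    \<and> \<not> power_stable I"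
proof -
  have rad: "radical I = ideal_gen {[:0, 1:], [:p:]}"
    unfolding I_def ideal_X_p_eq by (rule radical_ideal_I[OF assms(2)])
  have max: "maximal_ideal (ideal_gen {[:0, 1:], [:p:]})"
    unfolding ideal_X_p_eq by (rule maximal_ideal_X_p[OF assms(1,2)])
  have "I \<noteq> UNIV"
    using ideal_I_sub_X_p[of p] maximal_ideal_X_p[OF assms(1,2)]
    unfolding I_def maximal_ideal_def by blast
  moreover have "is_ideal I" unfolding I_def by (rule ideal_gen_ideal)
  ultimately have "primary_ideal I"
    using max unfolding rad[symmetric] by (intro radical_maximal_imp_primary)
  then show ?thesis
    using rad max not_power_stable_ideal_I[OF assms(2)] unfolding I_def by blast
qed

end
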